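(* Let $X$ be a coverable vertex parameter, let $G$ be a graph, and let $v\in V(G)$. If $X(G)=X(G-v)+1$, then $\mathcal{R}^{\mathrm{TE}}_X(G-v)$ is isomorphic to a subgraph of $\mathcal{R}^{\mathrm{TE}}_X(G)$ and $\mathcal{R}^{\mathrm{TS}}_X(G-v)$ is isomorphic to a subgraph of $\mathcal{R}^{\mathrm{TS}}_X(G)$.
   Context: All graphs are finite and simple. A graph parameter $X$ is a vertex parameter defined by property $x$ if for every graph $G$, $X(G)$ equals either (for every graph) the maximum, or (for every graph) the minimum, of $|B|$ over all $B\subseteq V(G)$ having property $x$ in $G$. $X$ is coverable if for every graph $G$ and every $v\in V(G)$, whenever $B$ has property $x$ in $G-v$, the set $B\cup\{v\}$ has property $x$ in $G$. The token exchange graph $\mathcal{R}^{\mathrm{TE}}_X(G)$ has as vertices all $S\subseteq V(G)$ with $|S|=X(G)$ having property $x$ in $G$, with $S_1S_2$ an edge iff there exist $v_1\in S_1\setminus S_2$, $v_2\in S_2\setminus S_1$ with $S_1\setminus\{v_1\}=S_2\setminus\{v_2\}$; the token sliding graph $\mathcal{R}^{\mathrm{TS}}_X(G)$ has the same vertices with the additional requirement $v_1v_2\in E(G)$. *)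

theory Defs
  imports Main
begin

type_synonym 'a graph = "'a set \<times> 'a set set"

definition verts :: "'a graph \<Rightarrow> 'a set" where "verts G = fst G"
definition edges :: "'a graph \<Rightarrow> 'a set set" where "edges G = snd G"

definition graph :: "'a graph \<Rightarrow> bool" where
  "graph G \<longleftrightarrow> finite (verts G) \<and> (\<forall>e\<in>edges G. e \<subseteq> verts G \<and> card e = 2)"

definition del_vert :: "'a graph \<Rightarrow> 'a \<Rightarrow> 'a graph" where
  "del_vert G v = (verts G - {v}, {e \<in> edges G. v \<notin> e})"

definition prop_sizes :: "('a graph \<Rightarrow> 'a set \<Rightarrow> bool) \<Rightarrow> 'a graph \<Rightarrow> nat set" where
  "prop_sizes P G = {card B | B. B \<subseteq> verts G \<and> P G B}"

definition vertex_parameter :: "('a graph \<Rightarrow> nat) \<Rightarrow> ('a graph \<Rightarrow> 'a set \<Rightarrow> bool) \<Rightarrow> bool" where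
  "vertex_parameter X P \<longleftrightarrow>
     (\<forall>G. graph G \<longrightarrow> X G \<in> prop_sizes P G \<and> (\<forall>k\<in>prop_sizes P G. k \<le> X G)) \<or>
     (\<forall>G. graph G \<longrightarrow> X G \<in> prop_sizes P G \<and> (\<forall>k\<in>prop_sizes P G. X G \<le> k))"

definition coverable :: "('a graph \<Rightarrow> 'a set \<Rightarrow> bool) \<Rightarrow> bool" where
  "coverable P \<longleftrightarrow>
     (\<forall>G v B. graph G \<and> v \<in> verts G \<and> B \<subseteq> verts (del_vert G v) \<and> P (del_vert G v) B
        \<longrightarrow> P G (B \<union> {v}))"

definition TE_graph :: "('a graph \<Rightarrow> nat) \<Rightarrow> ('a graph \<Rightarrow> 'a set \<Rightarrow> bool) \<Rightarrow> 'a graph \<Rightarrow> 'a set graph" where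
  "TE_graph X P G =
     ({S. S \<subseteq> verts G \<and> card S = X G \<and> P G S},
      {{S1, S2} | S1 S2. S1 \<subseteq> verts G \<and> card S1 = X G \<and> P G S1 \<and>
                         S2 \<subseteq> verts G \<and> card S2 = X G \<and> P G S2 \<and>
         (\<exists>v1 v2. v1 \<in> S1 - S2 \<and> v2 \<in> S2 - S1 \<and> S1 - {v1} = S2 - {v2})})"

definition TS_graph :: "('a graph \<Rightarrow> nat) \<Rightarrow> ('a graph \<Rightarrow> 'a set \<Rightarrow> bool) \<Rightarrow> 'a graph \<Rightarrow> 'a set graph" where
  "TS_graph X P G =
     ({S. S \<subseteq> verts G \<and> card S = X G \<and> P G S},
      {{S1, S2} | S1 S2. S1 \<subseteq> verts G \<and> card S1 = X G \<and> P G S1 \<and>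
                         S2 \<subseteq> verts G \<and> card S2 = X G \<and> P G S2 \<and>
         (\<exists>v1 v2. v1 \<in> S1 - S2 \<and> v2 \<in> S2 - S1 \<and> S1 - {v1} = S2 - {v2} \<and> {v1, v2} \<in> edges G)})"

definition iso_subgraph :: "'b graph \<Rightarrow> 'c graph \<Rightarrow> bool" where
  "iso_subgraph H K \<longleftrightarrow>
     (\<exists>f. inj_on f (verts H) \<and> f ` verts H \<subseteq> verts K \<and> (\<forall>e\<in>edges H. f ` e \<in> edges K))"

end

theory Submission
  imports Defs
begin

text \<open>Proof idea: since \<open>X(G) = X(G - v) + 1\<close> and \<open>X\<close> is coverable, adding \<open>v\<close> turns every
  solution of \<open>G - v\<close> into a solution of \<open>G\<close>. The map \<open>S \<mapsto> S \<union> {v}\<close> is injective on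
  subsets of \<open>V(G) - {v}\<close>, and a token move \<open>v\<^sub>1 \<mapsto> v\<^sub>2\<close> between two solutions of \<open>G - v\<close> is
  still a move between their images, along an edge of \<open>G\<close> if it was along one of \<open>G - v\<close>.\<close>

lemma verts_del_vert [simp]: "verts (del_vert G v) = verts G - {v}"
  by (simp add: del_vert_def verts_def)

lemma edges_del_vert [simp]: "edges (del_vert G v) = {e \<in> edges G. v \<notin> e}"
  by (simp add: del_vert_def edges_def)

definition solution :: "('a graph \<Rightarrow> nat) \<Rightarrow> ('a graph \<Rightarrow> 'a set \<Rightarrow> bool) \<Rightarrow> 'a graph \<Rightarrow> 'a set \<Rightarrow> bool"
  where "solution X P G S \<longleftrightarrow> S \<subseteq> verts G \<and> card S = X G \<and> P G S"

definition reconf_graph :: "('a set \<Rightarrow> bool) \<Rightarrow> ('a \<Rightarrow> 'a \<Rightarrow> bool) \<Rightarrow> 'a set graph" where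
  "reconf_graph F R =
     ({S. F S},
      {{S1, S2} | S1 S2. F S1 \<and> F S2 \<and>
         (\<exists>v1 v2. v1 \<in> S1 - S2 \<and> v2 \<in> S2 - S1 \<and> S1 - {v1} = S2 - {v2} \<and> R v1 v2)})"

lemma TE_graph_eq_reconf_graph: "TE_graph X P G = reconf_graph (solution X P G) (\<lambda>_ _. True)"
  by (simp add: TE_graph_def reconf_graph_def solution_def)

lemma TS_graph_eq_reconf_graph:
  "TS_graph X P G = reconf_graph (solution X P G) (\<lambda>v1 v2. {v1, v2} \<in> edges G)"
  by (simp add: TS_graph_def reconf_graph_def solution_def)

lemma token_move_insert:
  assumes "v \<notin> S1" "v \<notin> S2" "v1 \<in> S1 - S2" "v2 \<in> S2 - S1" "S1 - {v1} = S2 - {v2}"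
  shows "v1 \<in> insert v S1 - insert v S2" "v2 \<in> insert v S2 - insert v S1"
    "insert v S1 - {v1} = insert v S2 - {v2}"
  using assms by auto

lemma iso_subgraph_reconf_graph_insert:
  assumes F: "\<And>S. F S \<Longrightarrow> v \<notin> S \<and> F' (insert v S)"
    and R: "\<And>v1 v2. R v1 v2 \<Longrightarrow> R' v1 v2"
  shows "iso_subgraph (reconf_graph F R) (reconf_graph F' R')"
  unfolding iso_subgraph_def
proof (intro exI[of _ "insert v"] conjI ballI)
  show "inj_on (insert v) (verts (reconf_graph F R))"
    using F by (auto simp: inj_on_def reconf_graph_def verts_def insert_ident)
  show "insert v ` verts (reconf_graph F R) \<subseteq> verts (reconf_graph F' R')"
    using F by (auto simp: reconf_graph_def verts_def)
next
  fix e assume "e \<in> edges (reconf_graph F R)"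
  then obtain S1 S2 v1 v2 where e: "e = {S1, S2}" and S: "F S1" "F S2"
    and move: "v1 \<in> S1 - S2" "v2 \<in> S2 - S1" "S1 - {v1} = S2 - {v2}" and "R v1 v2"
    by (auto simp: reconf_graph_def edges_def)
  have "v \<notin> S1" "v \<notin> S2" "F' (insert v S1)" "F' (insert v S2)"
    using F[OF S(1)] F[OF S(2)] by auto
  moreover note token_move_insert[OF \<open>v \<notin> S1\<close> \<open>v \<notin> S2\<close> move]
  moreover have "R' v1 v2" using R \<open>R v1 v2\<close> .
  ultimately show "insert v ` e \<in> edges (reconf_graph F' R')"
    unfolding e reconf_graph_def edges_def by auto
qed

lemma solution_insert_del_vert:
  assumes "coverable P" "graph G" "v \<in> verts G" "X G = X (del_vert G v) + 1"
    and "solution X P (del_vert G v) S"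
  shows "v \<notin> S" "solution X P G (insert v S)"
proof -
  have S: "S \<subseteq> verts G - {v}" "card S = X (del_vert G v)" "P (del_vert G v) S"
    using assms(5) by (auto simp: solution_def)
  show "v \<notin> S" using S(1) by blast
  have "finite S" using S(1) \<open>graph G\<close> by (auto simp: graph_def intro: finite_subset)
  then have "card (insert v S) = X G" using \<open>v \<notin> S\<close> S(2) assms(4) by simp
  moreover have "P G (insert v S)"
    using assms(1-3) S unfolding coverable_def by (metis Un_insert_right sup_bot_right verts_del_vert)
  ultimately show "solution X P G (insert v S)"
    using S(1) assms(3) by (auto simp: solution_def)
qed

theorem theorem3p6:
  fixes X :: "'a graph \<Rightarrow> nat" and P :: "'a graph \<Rightarrow> 'a set \<Rightarrow> bool"
    and G :: "'a graph" and v :: 'a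
  assumes "vertex_parameter X P"
    and "coverable P"
    and "graph G"
    and "v \<in> verts G"
    and "X G = X (del_vert G v) + 1"
  shows "iso_subgraph (TE_graph X P (del_vert G v)) (TE_graph X P G)
       \<and> iso_subgraph (TS_graph X P (del_vert G v)) (TS_graph X P G)"
proof -
  note solution_insert = solution_insert_del_vert[OF assms(2-5)]
  have "edges (del_vert G v) \<subseteq> edges G" by auto
  then show ?thesis
    unfolding TE_graph_eq_reconf_graph TS_graph_eq_reconf_graph
    using solution_insert by (auto intro!: iso_subgraph_reconf_graph_insert)
qed

end
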